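(* Let $U$ be an $n$-qubit unitary and $M^U$ the representation matrix of the channel $\rho\mapsto U\rho U^\dagger$. Then: (1) for $0<p<2$ and $0<q\le\infty$, $\|M^U\|_{p,q}\ge1$, with equality if and only if $U$ is a Clifford unitary; (2) for $p>2$ and $0<q<\infty$, $\|M^U\|_{p,q}\le1$, with equality if and only if $U$ is a Clifford unitary; (3) for $p=2$ and any $q>0$ (including $q=\infty$), and for $p>2$ and $q=\infty$, $\|M^U\|_{p,q}=1$.
   Context: Pauli notation: $P_{\vec z}=P_{z_1}\otimes\cdots\otimes P_{z_n}$ for $\vec z\in\{0,1,2,3\}^n$, $P_0=\mathbb I,P_1=X,P_2=Y,P_3=Z$. Representation matrix: $M^\Phi_{\vec z\vec x}=2^{-n}\mathrm{Tr}(P_{\vec z}\Phi(P_{\vec x}))$. A Clifford unitary is a unitary $U$ such that $UP_{\vec x}U^\dagger$ is, up to a phase, a Pauli operator for every $\vec x$. Group norm: $\|M\|_{p,q}=(\frac1{N_1}\sum_i\|M_i\|_p^q)^{1/q}$ for an $N_1\times N_2$ matrix with rows $M_i$ ($\max_i\|M_i\|_p$ if $q=\infty$); $\|\cdot\|_p$ for $0<p<1$ is the usual $(\sum|\cdot|^p)^{1/p}$ quasi-norm. *)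

theory Defs
  imports "HOL-Analysis.Analysis" "HOL-Library.Extended_Real"
begin

(* Square complex matrices of dimension d are represented as functions
   nat => nat => complex; only entries with indices < d are relevant. *)
type_synonym cmat = "nat \<Rightarrow> nat \<Rightarrow> complex"

definition mmul :: "nat \<Rightarrow> cmat \<Rightarrow> cmat \<Rightarrow> cmat" where
  "mmul d A B = (\<lambda>i j. \<Sum>k<d. A i k * B k j)"

definition adj :: "cmat \<Rightarrow> cmat" where
  "adj A = (\<lambda>i j. cnj (A j i))"

definition mtrace :: "nat \<Rightarrow> cmat \<Rightarrow> complex" where
  "mtrace d A = (\<Sum>i<d. A i i)"

definition is_unitary :: "nat \<Rightarrow> cmat \<Rightarrow> bool" where
  "is_unitary n U \<longleftrightarrow>
     (\<forall>i<2^n. \<forall>j<2^n. mmul (2^n) (adj U) U i j = (if i = j then 1 else 0)) \<and>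
     (\<forall>i<2^n. \<forall>j<2^n. mmul (2^n) U (adj U) i j = (if i = j then 1 else 0))"

(* single-qubit Paulis: 0 = I, 1 = X, 2 = Y, 3 = Z (2x2 entries indexed by 0/1) *)
definition pauli1 :: "nat \<Rightarrow> cmat" where
  "pauli1 a = (\<lambda>i j.
     if a = 0 then (if i = j then 1 else 0)
     else if a = 1 then (if i \<noteq> j then 1 else 0)
     else if a = 2 then (if i = 0 \<and> j = 1 then - \<i> else if i = 1 \<and> j = 0 then \<i> else 0)
     else (if i = j then (if i = 0 then 1 else -1) else 0))"

definition pauli_idx :: "nat \<Rightarrow> nat list set" where
  "pauli_idx n = {z. length z = n \<and> set z \<subseteq> {0..<4}}"

(* P_z = P_{z_1} \<otimes> ... \<otimes> P_{z_n}; qubit k (0-based position in z) is the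
   bit of weight 2^(n-1-k) of the row/column index (standard Kronecker order) *)
definition pauli :: "nat \<Rightarrow> nat list \<Rightarrow> cmat" where
  "pauli n z = (\<lambda>i j. \<Prod>k<n. pauli1 (z ! k) ((i div 2^(n-1-k)) mod 2) ((j div 2^(n-1-k)) mod 2))"

definition repmat :: "nat \<Rightarrow> cmat \<Rightarrow> nat list \<Rightarrow> nat list \<Rightarrow> complex" where
  "repmat n U z x = mtrace (2^n) (mmul (2^n) (pauli n z) (mmul (2^n) (mmul (2^n) U (pauli n x)) (adj U))) / 2^n"

definition row_pnorm :: "nat \<Rightarrow> cmat \<Rightarrow> real \<Rightarrow> nat list \<Rightarrow> real" where
  "row_pnorm n U p z = (\<Sum>x\<in>pauli_idx n. cmod (repmat n U z x) powr p) powr (1 / p)"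

definition group_norm :: "nat \<Rightarrow> cmat \<Rightarrow> real \<Rightarrow> ereal \<Rightarrow> real" where
  "group_norm n U p q =
     (if q = \<infinity> then Max (row_pnorm n U p ` pauli_idx n)
      else ((1 / real (card (pauli_idx n))) *
            (\<Sum>z\<in>pauli_idx n. row_pnorm n U p z powr real_of_ereal q)) powr (1 / real_of_ereal q))"

definition is_clifford :: "nat \<Rightarrow> cmat \<Rightarrow> bool" where
  "is_clifford n U \<longleftrightarrow> is_unitary n U \<and>
     (\<forall>x\<in>pauli_idx n. \<exists>c z. cmod c = 1 \<and> z \<in> pauli_idx n \<and>
        (\<forall>i<2^n. \<forall>j<2^n.
           mmul (2^n) (mmul (2^n) U (pauli n x)) (adj U) i j = c * pauli n z i j))"

end

theory Submission
  imports Defs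
begin

text \<open>The Pauli operators are orthogonal for the Hilbert-Schmidt inner product, each of squared
norm \<open>2^n\<close>. By Parseval and unitary invariance of the Frobenius norm, every row and every
column of \<open>M^U\<close> is therefore a unit vector in \<open>\<ell>\<^sub>2\<close>, so its entries have modulus in
\<open>[0,1]\<close>. For such \<open>a\<close>, \<open>a^p \<ge> a^2\<close> when \<open>p < 2\<close> and \<open>a^p \<le> a^2\<close> when \<open>p > 2\<close>, with
equality exactly when \<open>a \<in> {0,1}\<close>; hence every row has \<open>\<ell>\<^sub>p\<close>-norm \<open>\<ge> 1\<close> (resp. \<open>\<le> 1\<close>),
with equality iff all its entries have modulus 0 or 1. A unit column with entries of modulus
0 or 1 has a single nonzero entry, i.e. \<open>U P\<^sub>x U\<^sup>\<dagger>\<close> is a phase times one Pauli operator: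
this is the Clifford property. The \<open>q\<close>-power mean over the rows preserves both the inequality
and its equality case; for \<open>q = \<infinity>\<close> and \<open>p > 2\<close> the row of the identity, which is a standard
basis vector, attains the maximum 1.\<close>

abbreviation qubit :: "nat \<Rightarrow> nat \<Rightarrow> nat \<Rightarrow> nat" where
  "qubit n k i \<equiv> i div 2^(n-1-k) mod 2"

lemma sum_lessThan_add:
  "(\<Sum>i<(a::nat)+b. f i) = (\<Sum>i<a. f i) + (\<Sum>i<b. f (a+i))"
  by (induction b) (simp_all add: add.assoc)

text \<open>Stated with \<open>n - Suc k\<close>, the simp normal form of the exponent \<open>n - 1 - k\<close> in \<^const>\<open>pauli\<close>.\<close>

lemma qubit_add_high:
  fixes i k n :: nat
  assumes "k < n"
  shows "(2^n + i) div 2^(n - Suc k) mod 2 = i div 2^(n - Suc k) mod 2"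
proof -
  have "n = (n - Suc k) + Suc k" using assms by simp
  then have "(2::nat)^n = 2^(n - Suc k) * 2^(Suc k)"
    by (metis power_add)
  then have "(2^n + i) div 2^(n - Suc k) = 2^(Suc k) + i div 2^(n - Suc k)"
    by simp
  then show ?thesis by simp
qed

lemma sum_qubits_prod:
  fixes G :: "nat \<Rightarrow> nat \<Rightarrow> 'a::comm_semiring_1"
  shows "(\<Sum>i<2^n. \<Prod>k<n. G k (qubit n k i)) = (\<Prod>k<n. G k 0 + G k 1)"
proof (induction n arbitrary: G)
  case 0
  then show ?case by simp
next
  case (Suc n)
  let ?F = "\<lambda>i. \<Prod>k<n. G (Suc k) (qubit n k i)"
  have low: "(\<Prod>k<Suc n. G k (i div 2^(n-k) mod 2)) = G 0 0 * ?F i" if "i < 2^n" for i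
    using that by (simp add: prod.lessThan_Suc_shift del: prod.lessThan_Suc)
  have high: "(\<Prod>k<Suc n. G k ((2^n + i) div 2^(n-k) mod 2)) = G 0 1 * ?F i" if "i < 2^n" for i
  proof -
    have "?F (2^n + i) = ?F i"
      by (rule prod.cong) (auto simp: qubit_add_high)
    moreover have "(2^n + i) div 2^n mod 2 = (1::nat)"
      using that by simp
    ultimately show ?thesis
      by (simp add: prod.lessThan_Suc_shift del: prod.lessThan_Suc)
  qed
  have "(\<Sum>i<2^Suc n. \<Prod>k<Suc n. G k (qubit (Suc n) k i))
      = (\<Sum>i<2^n. \<Prod>k<Suc n. G k (qubit (Suc n) k i))
        + (\<Sum>i<2^n. \<Prod>k<Suc n. G k (qubit (Suc n) k (2^n + i)))"
    using sum_lessThan_add[of _ "2^n" "2^n"] by (simp add: mult_2 del: prod.lessThan_Suc)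
  also have "\<dots> = (G 0 0 + G 0 1) * (\<Sum>i<2^n. ?F i)"
    by (simp add: low high sum_distrib_left distrib_right sum.distrib del: prod.lessThan_Suc)
  also have "\<dots> = (\<Prod>k<Suc n. G k 0 + G k 1)"
    using Suc.IH[of "\<lambda>k. G (Suc k)"] by (simp add: prod.lessThan_Suc_shift del: prod.lessThan_Suc)
  finally show ?case .
qed

lemma qubits_eq_imp_eq:
  fixes i j n :: nat
  assumes "i < 2^n" "j < 2^n" "\<forall>k<n. qubit n k i = qubit n k j"
  shows "i = j"
proof (rule bit_eqI)
  fix m
  show "bit i m = bit j m"
  proof (cases "m < n")
    case True
    then have "n - 1 - (n - 1 - m) = m" by simp
    with assms(3)[rule_format, of "n-1-m"] True
    have "i div 2^m mod 2 = j div 2^m mod 2" by simp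
    then show ?thesis by (simp add: bit_iff_odd odd_iff_mod_2_eq_one)
  next
    case False
    then have "(2::nat)^n \<le> 2^m" by simp
    then have "i < 2^m" "j < 2^m" using assms(1,2) by linarith+
    then show ?thesis by (simp add: bit_iff_odd)
  qed
qed

lemma pauli_idx_Suc: "pauli_idx (Suc n) = (\<lambda>(a,z). a#z) ` ({..<4} \<times> pauli_idx n)"
  unfolding pauli_idx_def by (auto simp: length_Suc_conv image_iff)

lemma finite_pauli_idx: "finite (pauli_idx n)"
  unfolding pauli_idx_def using finite_lists_length_eq[of "{0..<4::nat}" n] by (simp add: conj_commute)

lemma replicate_0_in_pauli_idx: "replicate n 0 \<in> pauli_idx n"
  by (simp add: pauli_idx_def set_replicate_conv_if)

lemma sum_pauli_idx_prod:
  fixes H :: "nat \<Rightarrow> nat \<Rightarrow> 'a::comm_semiring_1"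
  shows "(\<Sum>z\<in>pauli_idx n. \<Prod>k<n. H k (z!k)) = (\<Prod>k<n. \<Sum>a<4. H k a)"
proof (induction n arbitrary: H)
  case 0
  have "pauli_idx 0 = {[]}" by (auto simp: pauli_idx_def)
  then show ?case by simp
next
  case (Suc n)
  have inj: "inj_on (\<lambda>(a,z). a#z) ({..<4::nat} \<times> pauli_idx n)" by (auto simp: inj_on_def)
  have "(\<Sum>z\<in>pauli_idx (Suc n). \<Prod>k<Suc n. H k (z!k))
      = (\<Sum>(a,z)\<in>{..<4} \<times> pauli_idx n. \<Prod>k<Suc n. H k ((a#z)!k))"
    unfolding pauli_idx_Suc sum.reindex[OF inj] by (simp add: case_prod_beta' del: prod.lessThan_Suc)
  also have "\<dots> = (\<Sum>a<4. \<Sum>z\<in>pauli_idx n. H 0 a * (\<Prod>k<n. H (Suc k) (z!k)))"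
    by (simp add: sum.cartesian_product[symmetric] prod.lessThan_Suc_shift del: prod.lessThan_Suc)
  also have "\<dots> = (\<Prod>k<Suc n. \<Sum>a<4. H k a)"
    using Suc.IH[of "\<lambda>k. H (Suc k)"]
    by (simp add: sum_distrib_left[symmetric] sum_distrib_right prod.lessThan_Suc_shift
        del: prod.lessThan_Suc)
  finally show ?case .
qed

lemma prod_if_const:
  fixes c :: "'a::comm_semiring_1"
  shows "(\<Prod>m<n. if P m then c else 0) = (if \<forall>m<n. P m then c^n else 0)"
  by (induction n) (auto simp: mult.commute less_Suc_eq)

lemma sum_lessThan_4: "(\<Sum>a<(4::nat). f a) = f 0 + f 1 + f 2 + f 3"
  by (simp add: numeral_eq_Suc lessThan_Suc add.assoc add.commute add.left_commute)

lemma less_2_cases: "(b::nat) < 2 \<Longrightarrow> b = 0 \<or> b = 1" by auto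

lemma pauli1_completeness:
  assumes "b1 < 2" "b2 < 2" "b3 < 2" "b4 < 2"
  shows "(\<Sum>a<4. pauli1 a b1 b2 * pauli1 a b4 b3) = (if b1 = b3 \<and> b2 = b4 then 2 else 0)"
  using less_2_cases[OF assms(1)] less_2_cases[OF assms(2)]
    less_2_cases[OF assms(3)] less_2_cases[OF assms(4)]
  by (auto simp: sum_lessThan_4 pauli1_def)

lemma cnj_pauli1: "cnj (pauli1 a i j) = pauli1 a j i"
  by (auto simp: pauli1_def)

lemma pauli1_row_norm:
  assumes "b < 2"
  shows "cmod (pauli1 a b 0) ^ 2 + cmod (pauli1 a b 1) ^ 2 = 1"
  using less_2_cases[OF assms] by (auto simp: pauli1_def)

lemma pauli_completeness:
  assumes "i < 2^n" "j < 2^n" "k < 2^n" "l < 2^n"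
  shows "(\<Sum>x\<in>pauli_idx n. pauli n x i j * pauli n x l k) = (if i = k \<and> j = l then 2^n else 0)"
proof -
  let ?b = "\<lambda>i m. qubit n m i"
  have "(\<Sum>x\<in>pauli_idx n. pauli n x i j * pauli n x l k)
      = (\<Prod>m<n. \<Sum>a<4. pauli1 a (?b i m) (?b j m) * pauli1 a (?b l m) (?b k m))"
    unfolding pauli_def prod.distrib[symmetric] by (rule sum_pauli_idx_prod)
  also have "\<dots> = (\<Prod>m<n. if ?b i m = ?b k m \<and> ?b j m = ?b l m then 2 else 0)"
    by (rule prod.cong) (simp_all add: pauli1_completeness del: of_nat_numeral)
  also have "\<dots> = (if \<forall>m<n. ?b i m = ?b k m \<and> ?b j m = ?b l m then 2^n else 0)"
    by (rule prod_if_const)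
  also have "(\<forall>m<n. ?b i m = ?b k m \<and> ?b j m = ?b l m) \<longleftrightarrow> i = k \<and> j = l"
    using qubits_eq_imp_eq[of i n k] qubits_eq_imp_eq[of j n l] assms by auto
  finally show ?thesis .
qed

lemma cnj_pauli: "cnj (pauli n x i j) = pauli n x j i"
  by (simp add: pauli_def cnj_pauli1)

lemma pauli_identity:
  assumes "i < 2^n" "j < 2^n"
  shows "pauli n (replicate n 0) i j = (if i = j then 1 else 0)"
proof -
  have "pauli n (replicate n 0) i j = (\<Prod>m<n. if qubit n m i = qubit n m j then 1 else 0)"
    unfolding pauli_def by (rule prod.cong) (auto simp: pauli1_def)
  also have "\<dots> = (if \<forall>m<n. qubit n m i = qubit n m j then 1 else 0)"
    by (simp add: prod_if_const)
  also have "(\<forall>m<n. qubit n m i = qubit n m j) \<longleftrightarrow> i = j"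
    using qubits_eq_imp_eq[of i n j] assms by auto
  finally show ?thesis .
qed

lemma mtrace_mmul: "mtrace d (mmul d A B) = (\<Sum>i<d. \<Sum>j<d. A i j * B j i)"
  by (simp add: mtrace_def mmul_def)

lemma mtrace_mmul_comm: "mtrace d (mmul d A B) = mtrace d (mmul d B A)"
  unfolding mtrace_mmul by (subst sum.swap) (simp add: mult.commute)

lemma mmul_assoc: "mmul d (mmul d A B) C = mmul d A (mmul d B C)"
  unfolding mmul_def
  by (auto simp: sum_distrib_left sum_distrib_right mult.assoc intro!: ext sum.swap)

lemma mtrace_mmul_cyclic:
  "mtrace d (mmul d A (mmul d (mmul d V C) W)) = mtrace d (mmul d C (mmul d (mmul d W A) V))"
  by (metis mmul_assoc mtrace_mmul_comm)

definition frob_sq :: "nat \<Rightarrow> cmat \<Rightarrow> real" where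
  "frob_sq d A = (\<Sum>i<d. \<Sum>j<d. cmod (A i j) ^ 2)"

lemma of_real_frob_sq: "complex_of_real (frob_sq d A) = (\<Sum>i<d. \<Sum>j<d. A i j * cnj (A i j))"
  by (simp only: frob_sq_def of_real_sum complex_norm_square)

lemma frob_sq_pauli: "frob_sq (2^n) (pauli n z) = 2^n"
proof -
  have "(\<Sum>j<2^n. cmod (pauli n z i j) ^ 2) = 1" if "i < 2^n" for i
  proof -
    have "(\<Sum>j<2^n. cmod (pauli n z i j) ^ 2)
        = (\<Sum>j<2^n. \<Prod>m<n. (\<lambda>m b. cmod (pauli1 (z!m) (qubit n m i) b) ^ 2) m (qubit n m j))"
      by (simp add: pauli_def prod_norm[symmetric] prod_power_distrib)
    also have "\<dots> = (\<Prod>m<n. cmod (pauli1 (z!m) (qubit n m i) 0) ^ 2 + cmod (pauli1 (z!m) (qubit n m i) 1) ^ 2)"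
      by (rule sum_qubits_prod)
    also have "\<dots> = 1"
      by (rule prod.neutral) (simp add: pauli1_row_norm del: One_nat_def)
    finally show ?thesis .
  qed
  then show ?thesis by (simp add: frob_sq_def)
qed

lemma sum_sum_delta:
  fixes c :: "nat \<Rightarrow> nat \<Rightarrow> 'a::comm_monoid_add"
  shows "(\<Sum>i<d. \<Sum>j<d. if i = k \<and> j = l then c i j else 0) = (if k < d \<and> l < d then c k l else 0)"
proof -
  have "(\<Sum>j<d. if i = k \<and> j = l then c i j else 0) = (if i = k \<and> l < d then c i l else 0)" for i
    by (cases "i = k") (simp_all add: sum.delta)
  then show ?thesis by (cases "l < d") (simp_all add: sum.delta)
qed

lemma pauli_expansion:
  assumes "l < 2^n" "k < 2^n"
  shows "(\<Sum>z\<in>pauli_idx n. mtrace (2^n) (mmul (2^n) (pauli n z) B) * pauli n z l k) = 2^n * B l k"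
proof -
  have "(\<Sum>z\<in>pauli_idx n. mtrace (2^n) (mmul (2^n) (pauli n z) B) * pauli n z l k)
      = (\<Sum>i<2^n. \<Sum>j<2^n. B j i * (\<Sum>z\<in>pauli_idx n. pauli n z i j * pauli n z l k))"
    unfolding mtrace_mmul
    by (simp add: sum_distrib_left sum_distrib_right mult_ac sum.swap[of _ "pauli_idx n"])
  also have "\<dots> = (\<Sum>i<2^n. \<Sum>j<2^n. if i = k \<and> j = l then 2^n * B j i else 0)"
    by (intro sum.cong refl) (simp add: pauli_completeness assms)
  also have "\<dots> = 2^n * B l k"
    using assms by (simp add: sum_sum_delta)
  finally show ?thesis .
qed

lemma pauli_parseval:
  "(\<Sum>x\<in>pauli_idx n. cmod (mtrace (2^n) (mmul (2^n) (pauli n x) A)) ^ 2) = 2^n * frob_sq (2^n) A"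
proof -
  let ?d = "2^n :: nat"
  let ?t = "\<lambda>x. mtrace ?d (mmul ?d (pauli n x) A)"
  have "cnj (?t x) = (\<Sum>i<?d. \<Sum>j<?d. pauli n x j i * cnj (A j i))" for x
    by (simp add: mtrace_mmul cnj_pauli)
  then have "(\<Sum>x\<in>pauli_idx n. ?t x * cnj (?t x))
      = (\<Sum>i<?d. \<Sum>j<?d. (\<Sum>x\<in>pauli_idx n. ?t x * pauli n x j i) * cnj (A j i))"
    by (simp add: sum_distrib_left sum_distrib_right mult.assoc sum.swap[of _ "pauli_idx n"])
  also have "\<dots> = 2^n * (\<Sum>i<?d. \<Sum>j<?d. A j i * cnj (A j i))"
    by (simp add: pauli_expansion sum_distrib_left mult.assoc)
  also have "\<dots> = 2^n * frob_sq ?d A"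
    by (subst sum.swap) (simp add: of_real_frob_sq)
  finally have "complex_of_real (\<Sum>x\<in>pauli_idx n. cmod (?t x) ^ 2) = complex_of_real (2^n * frob_sq ?d A)"
    by (simp only: of_real_sum complex_norm_square)
  then show ?thesis by (simp only: of_real_eq_iff)
qed

lemma norm_sq_vec_mul_unitary:
  assumes "\<forall>i<d. \<forall>j<d. mmul d W (adj W) i j = (if i = j then 1 else 0)"
  shows "(\<Sum>j<d. cmod (\<Sum>k<d. a k * W k j) ^ 2) = (\<Sum>k<d. cmod (a k) ^ 2)"
proof -
  have "(\<Sum>j<d. (\<Sum>k<d. a k * W k j) * cnj (\<Sum>k<d. a k * W k j))
      = (\<Sum>j<d. \<Sum>k'<d. \<Sum>k<d. a k * cnj (a k') * (W k j * cnj (W k' j)))"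
    by (simp add: sum_distrib_left sum_distrib_right mult_ac)
  also have "\<dots> = (\<Sum>k'<d. \<Sum>k<d. \<Sum>j<d. a k * cnj (a k') * (W k j * cnj (W k' j)))"
    by (subst sum.swap) (rule sum.cong[OF refl], rule sum.swap)
  also have "\<dots> = (\<Sum>k'<d. \<Sum>k<d. a k * cnj (a k') * (\<Sum>j<d. W k j * cnj (W k' j)))"
    by (simp add: sum_distrib_left)
  also have "\<dots> = (\<Sum>k'<d. \<Sum>k<d. if k = k' then a k * cnj (a k) else 0)"
    using assms by (intro sum.cong refl) (auto simp: mmul_def adj_def)
  also have "\<dots> = (\<Sum>k<d. a k * cnj (a k))"
    by simp
  finally have "complex_of_real (\<Sum>j<d. cmod (\<Sum>k<d. a k * W k j) ^ 2) = complex_of_real (\<Sum>k<d. cmod (a k) ^ 2)"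
    by (simp only: of_real_sum complex_norm_square)
  then show ?thesis by (simp only: of_real_eq_iff)
qed

lemma frob_sq_unitary_conj:
  assumes "\<forall>i<d. \<forall>j<d. mmul d W (adj W) i j = (if i = j then 1 else 0)"
  shows "frob_sq d (mmul d (mmul d (adj W) A) W) = frob_sq d A"
proof -
  let ?B = "mmul d (adj W) A"
  have cnj_B: "cnj (?B i k) = (\<Sum>l<d. cnj (A l k) * W l i)" for i k
    by (simp add: mmul_def adj_def mult.commute)
  have "frob_sq d (mmul d ?B W) = (\<Sum>i<d. \<Sum>k<d. cmod (?B i k) ^ 2)"
    unfolding frob_sq_def mmul_def[of d ?B W] by (intro sum.cong refl norm_sq_vec_mul_unitary assms)
  also have "\<dots> = (\<Sum>k<d. \<Sum>i<d. cmod (\<Sum>l<d. cnj (A l k) * W l i) ^ 2)"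
    by (subst sum.swap) (simp flip: cnj_B)
  also have "\<dots> = (\<Sum>k<d. \<Sum>l<d. cmod (A l k) ^ 2)"
    by (rule sum.cong[OF refl]) (subst norm_sq_vec_mul_unitary[OF assms], simp)
  also have "\<dots> = frob_sq d A"
    unfolding frob_sq_def by (rule sum.swap)
  finally show ?thesis .
qed

lemma pauli_parseval_normalized:
  "(\<Sum>x\<in>pauli_idx n. cmod (mtrace (2^n) (mmul (2^n) (pauli n x) A) / 2^n) ^ 2) = frob_sq (2^n) A / 2^n"
proof -
  have "(\<Sum>x\<in>pauli_idx n. cmod (mtrace (2^n) (mmul (2^n) (pauli n x) A) / 2^n) ^ 2)
      = 2^n * frob_sq (2^n) A / (2^n)^2"
    by (simp add: norm_divide norm_power power_divide pauli_parseval flip: sum_divide_distrib)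
  then show ?thesis by (simp add: power2_eq_square)
qed

lemma repmat_row_norm_sq:
  assumes "is_unitary n U"
  shows "(\<Sum>x\<in>pauli_idx n. cmod (repmat n U z x) ^ 2) = 1"
proof -
  have "repmat n U z x = mtrace (2^n) (mmul (2^n) (pauli n x) (mmul (2^n) (mmul (2^n) (adj U) (pauli n z)) U)) / 2^n" for x
    unfolding repmat_def by (subst mtrace_mmul_cyclic) (rule refl)
  moreover have "frob_sq (2^n) (mmul (2^n) (mmul (2^n) (adj U) (pauli n z)) U) = 2^n"
    using assms frob_sq_unitary_conj[of "2^n" U] by (simp add: is_unitary_def frob_sq_pauli)
  ultimately show ?thesis
    by (simp add: pauli_parseval_normalized)
qed

lemma repmat_col_norm_sq:
  assumes "is_unitary n U"
  shows "(\<Sum>z\<in>pauli_idx n. cmod (repmat n U z x) ^ 2) = 1"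
proof -
  have "\<forall>i<2^n. \<forall>j<2^n. mmul (2^n) (adj U) (adj (adj U)) i j = (if i = j then 1 else 0)"
    using assms by (simp add: is_unitary_def adj_def)
  then have "frob_sq (2^n) (mmul (2^n) (mmul (2^n) U (pauli n x)) (adj U)) = 2^n"
    using frob_sq_unitary_conj[of "2^n" "adj U" "pauli n x"] by (simp add: adj_def frob_sq_pauli)
  then show ?thesis
    unfolding repmat_def by (simp add: pauli_parseval_normalized)
qed

lemma repmat_identity:
  assumes "is_unitary n U"
  shows "repmat n U (replicate n 0) (replicate n 0) = 1"
proof -
  let ?I = "pauli n (replicate n 0)"
  let ?B = "mmul (2^n) (mmul (2^n) U ?I) (adj U)"
  have UI: "mmul (2^n) U ?I i l = U i l" if "l < 2^n" for i l
    using that by (simp add: mmul_def pauli_identity if_distrib cong: if_cong)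
  have B: "?B i i = 1" if "i < 2^n" for i
  proof -
    have "?B i i = mmul (2^n) U (adj U) i i"
      unfolding mmul_def[of "2^n" "mmul (2^n) U ?I"] by (simp add: UI mmul_def[of "2^n" U "adj U"])
    then show ?thesis using assms that by (simp add: is_unitary_def)
  qed
  have "mtrace (2^n) (mmul (2^n) ?I ?B) = (\<Sum>i<2^n. ?B i i)"
    unfolding mtrace_mmul by (intro sum.cong refl) (simp add: pauli_identity sum.delta flip: of_bool_def)
  also have "\<dots> = 2^n" by (simp add: B)
  finally show ?thesis by (simp add: repmat_def)
qed

lemma sum_squares_eq_1_single:
  fixes f :: "'a \<Rightarrow> real"
  assumes "finite S" "w \<in> S" "(\<Sum>z\<in>S. f z ^ 2) = 1" "f w ^ 2 = 1" "z \<in> S" "z \<noteq> w"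
  shows "f z = 0"
proof -
  have "(\<Sum>z\<in>S - {w}. f z ^ 2) = 0"
    using assms(1-4) by (simp add: sum.remove)
  then show ?thesis
    using assms(1,5,6) by (subst (asm) sum_nonneg_eq_0_iff) auto
qed

lemma mtrace_pauli_sq: "mtrace (2^n) (mmul (2^n) (pauli n w) (pauli n w)) = 2^n"
proof -
  have "mtrace (2^n) (mmul (2^n) (pauli n w) (pauli n w))
      = (\<Sum>i<2^n. \<Sum>j<2^n. pauli n w i j * cnj (pauli n w i j))"
    by (simp add: mtrace_mmul cnj_pauli)
  then show ?thesis by (simp flip: of_real_frob_sq add: frob_sq_pauli)
qed

lemma clifford_imp_repmat_01:
  assumes "is_clifford n U" "z \<in> pauli_idx n" "x \<in> pauli_idx n"
  shows "cmod (repmat n U z x) = 0 \<or> cmod (repmat n U z x) = 1"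
proof -
  have U: "is_unitary n U" using assms(1) by (simp add: is_clifford_def)
  obtain c w where c: "cmod c = 1" and w: "w \<in> pauli_idx n" and
    B: "\<forall>i<2^n. \<forall>j<2^n. mmul (2^n) (mmul (2^n) U (pauli n x)) (adj U) i j = c * pauli n w i j"
    using assms(1,3) unfolding is_clifford_def by blast
  have "repmat n U w x = (\<Sum>i<2^n. \<Sum>j<2^n. pauli n w i j * (c * pauli n w j i)) / 2^n"
    unfolding repmat_def mtrace_mmul using B by simp
  also have "\<dots> = c * mtrace (2^n) (mmul (2^n) (pauli n w) (pauli n w)) / 2^n"
    by (simp add: mtrace_mmul sum_distrib_left mult.left_commute)
  also have "\<dots> = c"
    by (simp add: mtrace_pauli_sq)
  finally have Mw: "cmod (repmat n U w x) = 1" using c by simp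
  show ?thesis
  proof (cases "z = w")
    case False
    have "cmod (repmat n U z x) = 0"
      by (rule sum_squares_eq_1_single[OF finite_pauli_idx w repmat_col_norm_sq[OF U]])
        (use Mw assms(2) False in auto)
    then show ?thesis ..
  qed (use Mw in simp)
qed

lemma repmat_01_imp_clifford:
  assumes U: "is_unitary n U"
    and entries: "\<forall>z\<in>pauli_idx n. \<forall>x\<in>pauli_idx n. cmod (repmat n U z x) = 0 \<or> cmod (repmat n U z x) = 1"
  shows "is_clifford n U"
  unfolding is_clifford_def
proof (intro conjI U ballI)
  fix x assume x: "x \<in> pauli_idx n"
  let ?M = "\<lambda>z. repmat n U z x"
  let ?B = "mmul (2^n) (mmul (2^n) U (pauli n x)) (adj U)"
  have col: "(\<Sum>z\<in>pauli_idx n. cmod (?M z) ^ 2) = 1"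
    by (rule repmat_col_norm_sq[OF U])
  have "\<exists>w\<in>pauli_idx n. cmod (?M w) = 1"
  proof (rule ccontr)
    assume "\<not> ?thesis"
    then have "\<forall>z\<in>pauli_idx n. cmod (?M z) = 0" using entries x by blast
    then have "(\<Sum>z\<in>pauli_idx n. cmod (?M z) ^ 2) = 0" by simp
    with col show False by simp
  qed
  then obtain w where w: "w \<in> pauli_idx n" and Mw: "cmod (?M w) = 1" ..
  have others: "?M z = 0" if "z \<in> pauli_idx n" "z \<noteq> w" for z
  proof -
    have "cmod (?M z) = 0"
      by (rule sum_squares_eq_1_single[OF finite_pauli_idx w col]) (use Mw that in auto)
    then show ?thesis by simp
  qed
  have "?B i j = ?M w * pauli n w i j" if "i < 2^n" "j < 2^n" for i j
  proof -
    have "2^n * ?B i j = (\<Sum>z\<in>pauli_idx n. mtrace (2^n) (mmul (2^n) (pauli n z) ?B) * pauli n z i j)"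
      by (rule pauli_expansion[OF that, symmetric])
    also have "\<dots> = 2^n * (\<Sum>z\<in>pauli_idx n. ?M z * pauli n z i j)"
      by (simp add: repmat_def sum_distrib_left)
    also have "(\<Sum>z\<in>pauli_idx n. ?M z * pauli n z i j) = ?M w * pauli n w i j"
      using others by (intro sum.mono_neutral_left[of _ "{w}", simplified, symmetric, OF finite_pauli_idx w]) auto
    finally show ?thesis by simp
  qed
  with Mw w show "\<exists>c z. cmod c = 1 \<and> z \<in> pauli_idx n \<and> (\<forall>i<2^n. \<forall>j<2^n. ?B i j = c * pauli n z i j)"
    by (intro exI[of _ "?M w"] exI[of _ w]) simp
qed

lemma powr_eq_1_iff:
  fixes x e :: real
  assumes "0 \<le> x" "0 < e"
  shows "x powr e = 1 \<longleftrightarrow> x = 1"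
proof
  assume "x powr e = 1"
  moreover have "x = (x powr e) powr (1/e)"
    using assms by (simp add: powr_powr)
  ultimately show "x = 1" by simp
qed simp

lemma sum_mono_eq_iff:
  fixes f g :: "'a \<Rightarrow> real"
  assumes "finite S" "\<forall>x\<in>S. f x \<le> g x"
  shows "sum f S = sum g S \<longleftrightarrow> (\<forall>x\<in>S. f x = g x)"
proof -
  have "sum f S = sum g S \<longleftrightarrow> (\<Sum>x\<in>S. g x - f x) = 0"
    unfolding sum_subtractf by linarith
  also have "\<dots> \<longleftrightarrow> (\<forall>x\<in>S. g x - f x = 0)"
    using assms by (intro sum_nonneg_eq_0_iff) auto
  finally show ?thesis by auto
qed

lemma square_le_powr:
  fixes a p :: real
  assumes "0 \<le> a" "a \<le> 1" "0 < p" "p < 2"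
  shows "a ^ 2 \<le> a powr p \<and> (a powr p = a ^ 2 \<longleftrightarrow> a = 0 \<or> a = 1)"
proof (cases "a = 0 \<or> a = 1")
  case False
  with assms have "a powr 2 < a powr p" by (intro powr_less_mono') auto
  with False assms(1) show ?thesis by (simp add: powr_realpow')
qed auto

lemma powr_le_square:
  fixes a p :: real
  assumes "0 \<le> a" "a \<le> 1" "2 < p"
  shows "a powr p \<le> a ^ 2 \<and> (a powr p = a ^ 2 \<longleftrightarrow> a = 0 \<or> a = 1)"
proof (cases "a = 0 \<or> a = 1")
  case False
  with assms have "a powr p < a powr 2" by (intro powr_less_mono') auto
  with False assms(1) show ?thesis by (simp add: powr_realpow')
qed (use assms in auto)

lemma le_1_of_sum_squares_eq_1:
  fixes a :: "'b \<Rightarrow> real"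
  assumes "finite S" "x \<in> S" "(\<Sum>y\<in>S. a y ^ 2) = 1" "0 \<le> a x"
  shows "a x \<le> 1"
  using member_le_sum[of x S "\<lambda>y. a y ^ 2"] assms by (simp add: power_le_one_iff)

lemma sum_powr_ge_1_of_unit:
  fixes a :: "'b \<Rightarrow> real"
  assumes "finite S" "\<forall>x\<in>S. 0 \<le> a x" "(\<Sum>x\<in>S. a x ^ 2) = 1" "0 < p" "p < 2"
  shows "1 \<le> (\<Sum>x\<in>S. a x powr p) \<and> ((\<Sum>x\<in>S. a x powr p) = 1 \<longleftrightarrow> (\<forall>x\<in>S. a x = 0 \<or> a x = 1))"
proof -
  have pw: "\<forall>x\<in>S. a x ^ 2 \<le> a x powr p \<and> (a x powr p = a x ^ 2 \<longleftrightarrow> a x = 0 \<or> a x = 1)"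
    using assms le_1_of_sum_squares_eq_1[OF assms(1) _ assms(3)] square_le_powr by blast
  then have "(\<Sum>x\<in>S. a x ^ 2) \<le> (\<Sum>x\<in>S. a x powr p)"
    by (intro sum_mono) blast
  moreover have "(\<Sum>x\<in>S. a x ^ 2) = (\<Sum>x\<in>S. a x powr p) \<longleftrightarrow> (\<forall>x\<in>S. a x = 0 \<or> a x = 1)"
    using pw by (subst sum_mono_eq_iff[OF assms(1)]) auto
  ultimately show ?thesis using assms(3) by auto
qed

lemma sum_powr_le_1_of_unit:
  fixes a :: "'b \<Rightarrow> real"
  assumes "finite S" "\<forall>x\<in>S. 0 \<le> a x" "(\<Sum>x\<in>S. a x ^ 2) = 1" "2 < p"
  shows "(\<Sum>x\<in>S. a x powr p) \<le> 1 \<and> ((\<Sum>x\<in>S. a x powr p) = 1 \<longleftrightarrow> (\<forall>x\<in>S. a x = 0 \<or> a x = 1))"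
proof -
  have pw: "\<forall>x\<in>S. a x powr p \<le> a x ^ 2 \<and> (a x powr p = a x ^ 2 \<longleftrightarrow> a x = 0 \<or> a x = 1)"
    using assms le_1_of_sum_squares_eq_1[OF assms(1) _ assms(3)] powr_le_square by blast
  then have "(\<Sum>x\<in>S. a x powr p) \<le> (\<Sum>x\<in>S. a x ^ 2)"
    by (intro sum_mono) blast
  moreover have "(\<Sum>x\<in>S. a x powr p) = (\<Sum>x\<in>S. a x ^ 2) \<longleftrightarrow> (\<forall>x\<in>S. a x = 0 \<or> a x = 1)"
    using pw by (subst sum_mono_eq_iff[OF assms(1)]) auto
  ultimately show ?thesis using assms(3) by auto
qed

lemma row_pnorm_ge_1:
  assumes "is_unitary n U" "0 < p" "p < 2"
  shows "1 \<le> row_pnorm n U p z \<and>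
    (row_pnorm n U p z = 1 \<longleftrightarrow> (\<forall>x\<in>pauli_idx n. cmod (repmat n U z x) = 0 \<or> cmod (repmat n U z x) = 1))"
proof -
  let ?S = "\<Sum>x\<in>pauli_idx n. cmod (repmat n U z x) powr p"
  have S: "1 \<le> ?S \<and> (?S = 1 \<longleftrightarrow> (\<forall>x\<in>pauli_idx n. cmod (repmat n U z x) = 0 \<or> cmod (repmat n U z x) = 1))"
    using assms by (intro sum_powr_ge_1_of_unit finite_pauli_idx repmat_row_norm_sq) auto
  then show ?thesis
    using assms(2) powr_eq_1_iff[of ?S "1/p"] ge_one_powr_ge_zero[of ?S "1/p"]
    by (simp add: row_pnorm_def)
qed

lemma row_pnorm_le_1:
  assumes "is_unitary n U" "2 < p"
  shows "row_pnorm n U p z \<le> 1 \<and>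
    (row_pnorm n U p z = 1 \<longleftrightarrow> (\<forall>x\<in>pauli_idx n. cmod (repmat n U z x) = 0 \<or> cmod (repmat n U z x) = 1))"
proof -
  let ?S = "\<Sum>x\<in>pauli_idx n. cmod (repmat n U z x) powr p"
  have S: "?S \<le> 1 \<and> (?S = 1 \<longleftrightarrow> (\<forall>x\<in>pauli_idx n. cmod (repmat n U z x) = 0 \<or> cmod (repmat n U z x) = 1))"
    using assms by (intro sum_powr_le_1_of_unit finite_pauli_idx repmat_row_norm_sq) auto
  moreover have "0 \<le> ?S" by (simp add: sum_nonneg)
  ultimately show ?thesis
    using assms(2) powr_eq_1_iff[of ?S "1/p"] powr_le1[of "1/p" ?S]
    by (simp add: row_pnorm_def)
qed

lemma row_pnorm_2:
  assumes "is_unitary n U"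
  shows "row_pnorm n U 2 z = 1"
proof -
  have "(\<Sum>x\<in>pauli_idx n. cmod (repmat n U z x) powr 2) = 1"
    using repmat_row_norm_sq[OF assms] by (simp add: powr_realpow')
  then show ?thesis by (simp add: row_pnorm_def)
qed

lemma repmat_identity_row_01:
  assumes "is_unitary n U" "x \<in> pauli_idx n"
  shows "cmod (repmat n U (replicate n 0) x) = 0 \<or> cmod (repmat n U (replicate n 0) x) = 1"
proof (cases "x = replicate n 0")
  case False
  have "cmod (repmat n U (replicate n 0) x) = 0"
    by (rule sum_squares_eq_1_single[OF finite_pauli_idx replicate_0_in_pauli_idx repmat_row_norm_sq[OF assms(1)]])
      (use repmat_identity[OF assms(1)] assms(2) False in auto)
  then show ?thesis ..
qed (simp add: repmat_identity[OF assms(1)])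

definition power_mean :: "'a set \<Rightarrow> real \<Rightarrow> ('a \<Rightarrow> real) \<Rightarrow> real" where
  "power_mean X q r = ((1 / real (card X)) * (\<Sum>z\<in>X. r z powr q)) powr (1 / q)"

lemma power_mean_ge_1:
  assumes "finite X" "X \<noteq> {}" "\<forall>z\<in>X. 1 \<le> r z" "0 < q"
  shows "1 \<le> power_mean X q r \<and> (power_mean X q r = 1 \<longleftrightarrow> (\<forall>z\<in>X. r z = 1))"
proof -
  let ?A = "(1 / real (card X)) * (\<Sum>z\<in>X. r z powr q)"
  have card: "0 < real (card X)" using assms(1,2) by (simp add: card_gt_0_iff)
  have rq: "\<forall>z\<in>X. 1 \<le> r z powr q" using assms(3,4) by (simp add: ge_one_powr_ge_zero)
  then have "(\<Sum>z\<in>X. 1) \<le> (\<Sum>z\<in>X. r z powr q)" by (intro sum_mono) blast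
  then have A: "1 \<le> ?A" using card by (simp add: field_simps)
  have "?A = 1 \<longleftrightarrow> (\<Sum>z\<in>X. 1) = (\<Sum>z\<in>X. r z powr q)"
    using card by (auto simp: field_simps)
  also have "\<dots> \<longleftrightarrow> (\<forall>z\<in>X. r z = 1)"
    using rq assms(3,4) powr_eq_1_iff[of "r _" q] by (subst sum_mono_eq_iff[OF assms(1)]) force+
  finally show ?thesis
    using A assms(4) powr_eq_1_iff[of ?A "1/q"] ge_one_powr_ge_zero[of ?A "1/q"]
    by (simp add: power_mean_def)
qed

lemma power_mean_le_1:
  assumes "finite X" "X \<noteq> {}" "\<forall>z\<in>X. 0 \<le> r z \<and> r z \<le> 1" "0 < q"
  shows "power_mean X q r \<le> 1 \<and> (power_mean X q r = 1 \<longleftrightarrow> (\<forall>z\<in>X. r z = 1))"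
proof -
  let ?A = "(1 / real (card X)) * (\<Sum>z\<in>X. r z powr q)"
  have card: "0 < real (card X)" using assms(1,2) by (simp add: card_gt_0_iff)
  have rq: "\<forall>z\<in>X. r z powr q \<le> 1" using assms(3,4) by (simp add: powr_le1)
  then have "(\<Sum>z\<in>X. r z powr q) \<le> (\<Sum>z\<in>X. 1)" by (intro sum_mono) blast
  then have A: "?A \<le> 1" using card by (simp add: field_simps)
  have "?A = 1 \<longleftrightarrow> (\<Sum>z\<in>X. r z powr q) = (\<Sum>z\<in>X. 1)"
    using card by (auto simp: field_simps)
  also have "\<dots> \<longleftrightarrow> (\<forall>z\<in>X. r z = 1)"
    using rq assms(3,4) by (subst sum_mono_eq_iff[OF assms(1)]) (auto simp: powr_eq_1_iff)
  finally show ?thesis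
    using A assms(4) powr_eq_1_iff[of ?A "1/q"] powr_le1[of "1/q" ?A]
    by (simp add: power_mean_def sum_nonneg)
qed

lemma Max_image_ge_1:
  fixes r :: "'a \<Rightarrow> real"
  assumes "finite X" "X \<noteq> {}" "\<forall>z\<in>X. 1 \<le> r z"
  shows "1 \<le> Max (r ` X) \<and> (Max (r ` X) = 1 \<longleftrightarrow> (\<forall>z\<in>X. r z = 1))"
  using assms by (auto simp: Max_ge_iff Max_eq_iff intro!: antisym)

lemma group_norm_finite:
  "q \<noteq> \<infinity> \<Longrightarrow> group_norm n U p q = power_mean (pauli_idx n) (real_of_ereal q) (row_pnorm n U p)"
  by (simp add: group_norm_def power_mean_def)

lemma real_of_ereal_pos: "0 < q \<Longrightarrow> q \<noteq> \<infinity> \<Longrightarrow> 0 < real_of_ereal q"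
  by (cases q) auto

lemma pauli_idx_nonempty: "pauli_idx n \<noteq> {}"
  using replicate_0_in_pauli_idx by blast

lemma group_norm_ge_1:
  assumes "\<forall>z\<in>pauli_idx n. 1 \<le> row_pnorm n U p z" "0 < q"
  shows "1 \<le> group_norm n U p q \<and> (group_norm n U p q = 1 \<longleftrightarrow> (\<forall>z\<in>pauli_idx n. row_pnorm n U p z = 1))"
proof (cases "q = \<infinity>")
  case True
  then show ?thesis
    using Max_image_ge_1[OF finite_pauli_idx pauli_idx_nonempty assms(1)] by (simp add: group_norm_def)
next
  case False
  then show ?thesis
    using power_mean_ge_1[OF finite_pauli_idx pauli_idx_nonempty assms(1) real_of_ereal_pos[OF assms(2) False]]
    by (simp add: group_norm_finite)
qed

lemma group_norm_le_1:
  assumes "\<forall>z\<in>pauli_idx n. row_pnorm n U p z \<le> 1" "0 < q" "q < \<infinity>"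
  shows "group_norm n U p q \<le> 1 \<and> (group_norm n U p q = 1 \<longleftrightarrow> (\<forall>z\<in>pauli_idx n. row_pnorm n U p z = 1))"
proof -
  have "\<forall>z\<in>pauli_idx n. 0 \<le> row_pnorm n U p z \<and> row_pnorm n U p z \<le> 1"
    using assms(1) by (simp add: row_pnorm_def)
  from power_mean_le_1[OF finite_pauli_idx pauli_idx_nonempty this real_of_ereal_pos[OF assms(2)]]
  show ?thesis using assms(3) by (simp add: group_norm_finite)
qed

theorem mainTheorem11:
  fixes n :: nat and U :: cmat
  assumes "is_unitary n U"
  shows "(\<forall>(p::real) (q::ereal). 0 < p \<and> p < 2 \<and> 0 < q \<longrightarrow>
            group_norm n U p q \<ge> 1 \<and> (group_norm n U p q = 1 \<longleftrightarrow> is_clifford n U))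
       \<and> (\<forall>(p::real) (q::ereal). p > 2 \<and> 0 < q \<and> q < \<infinity> \<longrightarrow>
            group_norm n U p q \<le> 1 \<and> (group_norm n U p q = 1 \<longleftrightarrow> is_clifford n U))
       \<and> (\<forall>q::ereal. 0 < q \<longrightarrow> group_norm n U 2 q = 1)
       \<and> (\<forall>p::real. p > 2 \<longrightarrow> group_norm n U p \<infinity> = 1)"
proof -
  have clifford: "is_clifford n U \<longleftrightarrow> (\<forall>z\<in>pauli_idx n. \<forall>x\<in>pauli_idx n.
      cmod (repmat n U z x) = 0 \<or> cmod (repmat n U z x) = 1)"
    using clifford_imp_repmat_01 repmat_01_imp_clifford[OF assms] by blast
  have p_lt_2: "group_norm n U p q \<ge> 1 \<and> (group_norm n U p q = 1 \<longleftrightarrow> is_clifford n U)"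
    if "0 < p" "p < 2" "0 < q" for p q
    using group_norm_ge_1[of n U p q] row_pnorm_ge_1[OF assms] that clifford by auto
  have p_gt_2: "group_norm n U p q \<le> 1 \<and> (group_norm n U p q = 1 \<longleftrightarrow> is_clifford n U)"
    if "2 < p" "0 < q" "q < \<infinity>" for p q
    using group_norm_le_1[of n U p q] row_pnorm_le_1[OF assms] that clifford by auto
  have p_2: "group_norm n U 2 q = 1" if "0 < q" for q
    using group_norm_ge_1[of n U 2 q] row_pnorm_2[OF assms] that by simp
  have p_gt_2_max: "group_norm n U p \<infinity> = 1" if "2 < p" for p
  proof -
    have "row_pnorm n U p (replicate n 0) = 1"
      using row_pnorm_le_1[OF assms that] repmat_identity_row_01[OF assms] by simp
    then show ?thesis
      using row_pnorm_le_1[OF assms that] finite_pauli_idx replicate_0_in_pauli_idx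
      by (auto simp: group_norm_def intro!: Max_eqI)
  qed
  show ?thesis using p_lt_2 p_gt_2 p_2 p_gt_2_max by blast
qed

end
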